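(* Let $h,n,k\geq2$ be integers with $k\leq n!$. Then $\{V\times\{id\}: V\in\mathrm{BGR}_h(k)\}\subseteq\mathrm{SPFAG}_h(n)$. If $k=n=2$, equality holds: $\{V\times\{id\}: V\in\mathrm{BGR}_h(2)\}=\mathrm{SPFAG}_h(2)$, and consequently $\{V\times\{id\}: V\in\bigcup_{h\geq2}\mathrm{BGR}_h(2)\}=\bigcup_{h\geq2}\mathrm{SPFAG}_h(2)$.
   Context: A $k$-valued Boolean function is a function $f:\{0,1\}^h\to\{0,\dots,k-1\}$. For $\varphi\in S_h$ and $x\in\{0,1\}^h$, $x^\varphi=(x_{\varphi^{-1}(1)},\dots,x_{\varphi^{-1}(h)})$; the invariance group of $f$ is $S(f)=\{\varphi\in S_h: f(x^\varphi)=f(x)\ \forall x\}$; $\mathrm{BGR}_h(k)=\{S(f): f \text{ a } k\text{-valued Boolean function on }\{0,1\}^h\}$. Permutations compose as $(\sigma\tau)(x)=\sigma(\tau(x))$. Let $G=S_h\times S_n$ and $\mathcal{P}=(S_n)^h$ (preference profiles), with $G$ acting by $(p^{(\varphi,\psi)})_i=\psi\,p_{\varphi^{-1}(i)}$. A social preference function (SPF) is any $F:\mathcal{P}\to S_n$; $G(F)=\{(\varphi,\psi)\in G: F(p^{(\varphi,\psi)})=\psi F(p)\ \forall p\}$ and $G_1(F)=G(F)\cap(S_h\times\{id\})$. $\mathrm{SPFAG}_h(n)$ is the set of subgroups $U\leq S_h\times\{id\}$ with $U=G_1(F)$ for some SPF $F$ on $(S_n)^h$. *)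

theory Defs
  imports "HOL-Combinatorics.Permutations"
begin

(* Permutations of {1..m} are represented as functions nat => nat with  p permutes {1..m}
   (identity outside {1..m}).  Composition is function composition: (s o t) x = s (t x). *)

definition Sym :: "nat \<Rightarrow> (nat \<Rightarrow> nat) set" where
  "Sym m = {p. p permutes {1..m}}"

definition bool_vecs :: "nat \<Rightarrow> (nat \<Rightarrow> bool) set" where
  "bool_vecs h = {x. \<forall>i. i \<notin> {1..h} \<longrightarrow> \<not> x i}"

definition vperm :: "(nat \<Rightarrow> bool) \<Rightarrow> (nat \<Rightarrow> nat) \<Rightarrow> (nat \<Rightarrow> bool)" where
  "vperm x \<phi> = (\<lambda>i. x (inv \<phi> i))"

definition kvalued :: "nat \<Rightarrow> nat \<Rightarrow> ((nat \<Rightarrow> bool) \<Rightarrow> nat) \<Rightarrow> bool" where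
  "kvalued h k f \<longleftrightarrow> (\<forall>x\<in>bool_vecs h. f x < k)"

definition inv_group :: "nat \<Rightarrow> ((nat \<Rightarrow> bool) \<Rightarrow> nat) \<Rightarrow> (nat \<Rightarrow> nat) set" where
  "inv_group h f = {\<phi> \<in> Sym h. \<forall>x\<in>bool_vecs h. f (vperm x \<phi>) = f x}"

definition BGR :: "nat \<Rightarrow> nat \<Rightarrow> (nat \<Rightarrow> nat) set set" where
  "BGR h k = {inv_group h f | f. kvalued h k f}"

definition profiles :: "nat \<Rightarrow> nat \<Rightarrow> (nat \<Rightarrow> nat \<Rightarrow> nat) set" where
  "profiles h n = {p. (\<forall>i\<in>{1..h}. p i \<in> Sym n) \<and> (\<forall>i. i \<notin> {1..h} \<longrightarrow> p i = id)}"

definition pact :: "nat \<Rightarrow> (nat \<Rightarrow> nat \<Rightarrow> nat) \<Rightarrow> (nat \<Rightarrow> nat) \<Rightarrow> (nat \<Rightarrow> nat) \<Rightarrow> (nat \<Rightarrow> nat \<Rightarrow> nat)" where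
  "pact h p \<phi> \<psi> = (\<lambda>i. if i \<in> {1..h} then \<psi> \<circ> p (inv \<phi> i) else id)"

definition SPF :: "nat \<Rightarrow> nat \<Rightarrow> ((nat \<Rightarrow> nat \<Rightarrow> nat) \<Rightarrow> (nat \<Rightarrow> nat)) \<Rightarrow> bool" where
  "SPF h n F \<longleftrightarrow> (\<forall>p\<in>profiles h n. F p \<in> Sym n)"

definition Ggrp :: "nat \<Rightarrow> nat \<Rightarrow> ((nat \<Rightarrow> nat \<Rightarrow> nat) \<Rightarrow> (nat \<Rightarrow> nat)) \<Rightarrow> ((nat \<Rightarrow> nat) \<times> (nat \<Rightarrow> nat)) set" where
  "Ggrp h n F = {(\<phi>, \<psi>) \<in> Sym h \<times> Sym n. \<forall>p\<in>profiles h n. F (pact h p \<phi> \<psi>) = \<psi> \<circ> F p}"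

definition G1 :: "nat \<Rightarrow> nat \<Rightarrow> ((nat \<Rightarrow> nat \<Rightarrow> nat) \<Rightarrow> (nat \<Rightarrow> nat)) \<Rightarrow> ((nat \<Rightarrow> nat) \<times> (nat \<Rightarrow> nat)) set" where
  "G1 h n F = Ggrp h n F \<inter> (Sym h \<times> {id})"

definition SPFAG :: "nat \<Rightarrow> nat \<Rightarrow> ((nat \<Rightarrow> nat) \<times> (nat \<Rightarrow> nat)) set set" where
  "SPFAG h n = {G1 h n F | F. SPF h n F}"

end

theory Submission
  imports Defs
begin

(* A Boolean vector x is read as the profile in which voter i reports the ranking a if x i holds
   and b otherwise; permuting voters acts on such two-valued profiles exactly as permuting
   coordinates acts on x.  Given a k-valued f, choose an injection g of {0..<k} into S_n
   (possible since k <= n!) and let F be g o f on two-valued profiles and constant elsewhere: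
   then an anonymity permutation of F is precisely a symmetry of f.  For n = 2 every profile is
   two-valued and an SPF with values in S_2 = {id, (1 2)} is a 2-valued Boolean function, so
   every anonymity group arises this way. *)

lemma id_in_Sym: "id \<in> Sym n"
  by (simp add: Sym_def)

lemma transpose_1_2_in_Sym: "2 \<le> n \<Longrightarrow> Transposition.transpose 1 2 \<in> Sym n"
  unfolding Sym_def by (auto intro: permutes_swap_id)

lemma id_ne_transpose_1_2: "id \<noteq> Transposition.transpose (1::nat) 2"
proof
  assume "id = Transposition.transpose (1::nat) 2"
  then have "(1::nat) = Transposition.transpose 1 2 1" by (metis id_apply)
  then show False by simp
qed

lemma Sym_2_eq: "Sym 2 = {id, Transposition.transpose 1 2}"
proof
  show "{id, Transposition.transpose 1 2} \<subseteq> Sym 2"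
    using id_in_Sym transpose_1_2_in_Sym by auto
next
  show "Sym 2 \<subseteq> {id, Transposition.transpose 1 2}"
  proof
    fix p assume "p \<in> Sym 2"
    moreover have "{1..2::nat} = {1, 2}" by auto
    ultimately have p: "p permutes {1, 2}" by (simp add: Sym_def)
    then have range: "p 1 \<in> {1, 2}" "p 2 \<in> {1, 2}" and "p 1 \<noteq> p 2"
      using permutes_in_image[OF p] permutes_inj[OF p] by (auto dest: injD)
    moreover have fixed: "p x = x" if "x \<notin> {1, 2}" for x
      using permutes_not_in[OF p that] .
    ultimately consider "p 1 = 1" "p 2 = 2" | "p 1 = 2" "p 2 = 1"
      by auto
    then show "p \<in> {id, Transposition.transpose 1 2}"
    proof cases
      case 1
      then have "p = id" using fixed by (intro ext) (metis id_apply insertE empty_iff)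
      then show ?thesis by simp
    next
      case 2
      then have "p = Transposition.transpose 1 2" using fixed
        by (intro ext) (auto simp: transpose_def)
      then show ?thesis by simp
    qed
  qed
qed

lemma inv_permutes_atLeastAtMost: "\<phi> \<in> Sym h \<Longrightarrow> inv \<phi> permutes {1..h}"
  by (simp add: Sym_def permutes_inv)

lemma inv_in_atLeastAtMost: "\<phi> \<in> Sym h \<Longrightarrow> i \<in> {1..h} \<Longrightarrow> inv \<phi> i \<in> {1..h}"
  by (simp only: permutes_in_image[OF inv_permutes_atLeastAtMost])

lemma vperm_in_bool_vecs: "\<phi> \<in> Sym h \<Longrightarrow> x \<in> bool_vecs h \<Longrightarrow> vperm x \<phi> \<in> bool_vecs h"
  unfolding bool_vecs_def vperm_def using permutes_not_in[OF inv_permutes_atLeastAtMost] by fastforce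

lemma pact_id_in_profiles: "\<phi> \<in> Sym h \<Longrightarrow> p \<in> profiles h n \<Longrightarrow> pact h p \<phi> id \<in> profiles h n"
  unfolding profiles_def pact_def using inv_in_atLeastAtMost by auto

lemma G1_eq:
  "G1 h n F = {\<phi> \<in> Sym h. \<forall>p\<in>profiles h n. F (pact h p \<phi> id) = F p} \<times> {id}"
  unfolding G1_def Ggrp_def using id_in_Sym by auto

definition profile_of :: "nat \<Rightarrow> (nat \<Rightarrow> nat) \<Rightarrow> (nat \<Rightarrow> nat) \<Rightarrow> (nat \<Rightarrow> bool) \<Rightarrow> (nat \<Rightarrow> nat \<Rightarrow> nat)" where
  "profile_of h a b x = (\<lambda>i. if i \<in> {1..h} then (if x i then a else b) else id)"

definition votes_for :: "nat \<Rightarrow> (nat \<Rightarrow> nat) \<Rightarrow> (nat \<Rightarrow> nat \<Rightarrow> nat) \<Rightarrow> (nat \<Rightarrow> bool)" where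
  "votes_for h a p = (\<lambda>i. i \<in> {1..h} \<and> p i = a)"

lemma profile_of_in_profiles: "a \<in> Sym n \<Longrightarrow> b \<in> Sym n \<Longrightarrow> profile_of h a b x \<in> profiles h n"
  unfolding profile_of_def profiles_def by auto

lemma votes_for_profile_of: "a \<noteq> b \<Longrightarrow> x \<in> bool_vecs h \<Longrightarrow> votes_for h a (profile_of h a b x) = x"
  unfolding profile_of_def votes_for_def bool_vecs_def by auto

lemma votes_for_in_bool_vecs: "votes_for h a p \<in> bool_vecs h"
  unfolding votes_for_def bool_vecs_def by auto

lemma pact_profile_of:
  "\<phi> \<in> Sym h \<Longrightarrow> pact h (profile_of h a b x) \<phi> id = profile_of h a b (vperm x \<phi>)"
  unfolding profile_of_def pact_def vperm_def using inv_in_atLeastAtMost by fastforce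

lemma profile_of_image_iff:
  assumes "p \<in> profiles h n" and "a \<noteq> b"
  shows "p \<in> profile_of h a b ` bool_vecs h \<longleftrightarrow> (\<forall>i\<in>{1..h}. p i \<in> {a, b})"
proof
  assume "\<forall>i\<in>{1..h}. p i \<in> {a, b}"
  then have "p = profile_of h a b (votes_for h a p)"
    using assms(1) unfolding profile_of_def votes_for_def profiles_def by (intro ext) auto
  then show "p \<in> profile_of h a b ` bool_vecs h"
    using votes_for_in_bool_vecs by blast
qed (auto simp: profile_of_def)

lemma pact_in_profile_of_image_iff:
  assumes "\<phi> \<in> Sym h" and "p \<in> profiles h n" and "a \<noteq> b"
  shows "pact h p \<phi> id \<in> profile_of h a b ` bool_vecs h \<longleftrightarrow> p \<in> profile_of h a b ` bool_vecs h"
proof -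
  have "pact h p \<phi> id \<in> profile_of h a b ` bool_vecs h \<longleftrightarrow> (\<forall>i\<in>{1..h}. pact h p \<phi> id i \<in> {a, b})"
    using profile_of_image_iff pact_id_in_profiles assms by blast
  also have "\<dots> \<longleftrightarrow> (\<forall>i\<in>{1..h}. p (inv \<phi> i) \<in> {a, b})"
    by (simp add: pact_def)
  also have "\<dots> \<longleftrightarrow> (\<forall>j\<in>inv \<phi> ` {1..h}. p j \<in> {a, b})"
    by simp
  also have "\<dots> \<longleftrightarrow> (\<forall>j\<in>{1..h}. p j \<in> {a, b})"
    using permutes_image[OF inv_permutes_atLeastAtMost[OF assms(1)]] by simp
  also have "\<dots> \<longleftrightarrow> p \<in> profile_of h a b ` bool_vecs h"
    using profile_of_image_iff assms(2,3) by blast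
  finally show ?thesis .
qed

lemma G1_eq_inv_group:
  assumes "a \<in> Sym n" and "b \<in> Sym n" and "a \<noteq> b"
    and faithful: "\<And>x y. x \<in> bool_vecs h \<Longrightarrow> y \<in> bool_vecs h \<Longrightarrow>
        F (profile_of h a b x) = F (profile_of h a b y) \<longleftrightarrow> f x = f y"
    and outside: "\<And>p \<phi>. p \<in> profiles h n \<Longrightarrow> p \<notin> profile_of h a b ` bool_vecs h \<Longrightarrow>
        \<phi> \<in> Sym h \<Longrightarrow> F (pact h p \<phi> id) = F p"
  shows "G1 h n F = inv_group h f \<times> {id}"
proof -
  have "(\<forall>p\<in>profiles h n. F (pact h p \<phi> id) = F p) \<longleftrightarrow> (\<forall>x\<in>bool_vecs h. f (vperm x \<phi>) = f x)"
    if \<phi>: "\<phi> \<in> Sym h" for \<phi>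
  proof
    assume "\<forall>p\<in>profiles h n. F (pact h p \<phi> id) = F p"
    then show "\<forall>x\<in>bool_vecs h. f (vperm x \<phi>) = f x"
      using faithful vperm_in_bool_vecs[OF \<phi>] profile_of_in_profiles[OF assms(1,2)]
      by (metis pact_profile_of[OF \<phi>])
  next
    assume f_inv: "\<forall>x\<in>bool_vecs h. f (vperm x \<phi>) = f x"
    show "\<forall>p\<in>profiles h n. F (pact h p \<phi> id) = F p"
    proof
      fix p assume p: "p \<in> profiles h n"
      show "F (pact h p \<phi> id) = F p"
      proof (cases "p \<in> profile_of h a b ` bool_vecs h")
        case True
        then obtain x where "x \<in> bool_vecs h" "p = profile_of h a b x" by blast
        then show ?thesis
          using f_inv faithful vperm_in_bool_vecs[OF \<phi>] by (simp add: pact_profile_of[OF \<phi>])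
      qed (use p \<phi> outside in blast)
    qed
  qed
  then show ?thesis
    unfolding G1_eq inv_group_def by auto
qed

lemma image_BGR_subset_SPFAG:
  assumes "2 \<le> n" and "k \<le> fact n"
  shows "(\<lambda>V. V \<times> {id}) ` BGR h k \<subseteq> SPFAG h n"
proof (rule image_subsetI)
  fix V assume "V \<in> BGR h k"
  then obtain f where f: "kvalued h k f" and V: "V = inv_group h f"
    unfolding BGR_def by auto
  have "card {..<k} \<le> card (Sym n)"
    using assms(2) by (simp add: Sym_def card_permutations)
  moreover have "finite (Sym n)"
    by (simp add: Sym_def finite_permutations)
  ultimately obtain g where g: "g ` {..<k} \<subseteq> Sym n" "inj_on g {..<k}"
    using card_le_inj[of "{..<k}" "Sym n"] by auto
  define a b where "a = (id :: nat \<Rightarrow> nat)" and "b = Transposition.transpose (1::nat) 2"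
  have ab: "a \<in> Sym n" "b \<in> Sym n" "a \<noteq> b"
    using id_in_Sym transpose_1_2_in_Sym[OF assms(1)] id_ne_transpose_1_2 by (auto simp: a_def b_def)
  define F where
    "F p = (if p \<in> profile_of h a b ` bool_vecs h then g (f (votes_for h a p)) else id)" for p
  have F_profile_of: "F (profile_of h a b x) = g (f x)" if "x \<in> bool_vecs h" for x
    using that votes_for_profile_of[OF ab(3)] by (auto simp: F_def)
  have "SPF h n F"
    using f g(1) id_in_Sym votes_for_in_bool_vecs by (auto simp: SPF_def F_def kvalued_def)
  moreover have "G1 h n F = V \<times> {id}"
    unfolding V
  proof (rule G1_eq_inv_group[OF ab])
    fix x y assume "x \<in> bool_vecs h" "y \<in> bool_vecs h"
    then show "F (profile_of h a b x) = F (profile_of h a b y) \<longleftrightarrow> f x = f y"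
      using f g(2) F_profile_of by (auto simp: kvalued_def dest: inj_onD)
  next
    fix p \<phi> assume "p \<in> profiles h n" "p \<notin> profile_of h a b ` bool_vecs h" "\<phi> \<in> Sym h"
    then show "F (pact h p \<phi> id) = F p"
      using pact_in_profile_of_image_iff ab(3) by (simp add: F_def)
  qed
  ultimately show "V \<times> {id} \<in> SPFAG h n"
    unfolding SPFAG_def by auto
qed

lemma SPFAG_2_subset_image_BGR_2: "SPFAG h 2 \<subseteq> (\<lambda>V. V \<times> {id}) ` BGR h 2"
proof
  fix W assume "W \<in> SPFAG h 2"
  then obtain F where F: "SPF h 2 F" and W: "W = G1 h 2 F"
    unfolding SPFAG_def by auto
  define a b where "a = (id :: nat \<Rightarrow> nat)" and "b = Transposition.transpose (1::nat) 2"
  have ab: "a \<in> Sym 2" "b \<in> Sym 2" "a \<noteq> b"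
    using Sym_2_eq id_ne_transpose_1_2 by (auto simp: a_def b_def)
  define f where "f x = (if F (profile_of h a b x) = a then 0 else 1 :: nat)" for x
  have F_values: "F (profile_of h a b x) \<in> {a, b}" for x
    using F profile_of_in_profiles[OF ab(1,2)] Sym_2_eq by (auto simp: SPF_def a_def b_def)
  have "kvalued h 2 f"
    by (simp add: kvalued_def f_def)
  moreover have "W = inv_group h f \<times> {id}"
    unfolding W
  proof (rule G1_eq_inv_group[OF ab])
    fix x y
    show "F (profile_of h a b x) = F (profile_of h a b y) \<longleftrightarrow> f x = f y"
      using F_values[of x] F_values[of y] ab(3) by (auto simp: f_def)
  next
    fix p \<phi> assume "p \<in> profiles h 2" "p \<notin> profile_of h a b ` bool_vecs h"
    moreover have "\<forall>i\<in>{1..h}. p i \<in> {a, b}" if "p \<in> profiles h 2"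
      using that Sym_2_eq by (auto simp: profiles_def a_def b_def)
    ultimately show "F (pact h p \<phi> id) = F p"
      using profile_of_image_iff ab(3) by blast
  qed
  ultimately show "W \<in> (\<lambda>V. V \<times> {id}) ` BGR h 2"
    unfolding BGR_def by auto
qed

lemma image_BGR_2_eq_SPFAG_2: "(\<lambda>V. V \<times> {id}) ` BGR h 2 = SPFAG h 2"
proof (rule subset_antisym)
  show "(\<lambda>V. V \<times> {id}) ` BGR h 2 \<subseteq> SPFAG h 2"
    by (rule image_BGR_subset_SPFAG) (simp_all add: fact_numeral)
qed (rule SPFAG_2_subset_image_BGR_2)

theorem mainTheorem19:
  fixes h n k :: nat
  assumes "h \<ge> 2" and "n \<ge> 2" and "k \<ge> 2" and "k \<le> fact n"
  shows "(\<lambda>V. V \<times> {id}) ` BGR h k \<subseteq> SPFAG h n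
     \<and> (\<lambda>V. V \<times> {id}) ` BGR h 2 = SPFAG h 2
     \<and> (\<lambda>V. V \<times> {id}) ` (\<Union>h'\<in>{2..}. BGR h' 2) = (\<Union>h'\<in>{2..}. SPFAG h' 2)"
  using image_BGR_subset_SPFAG[OF assms(2,4)] image_BGR_2_eq_SPFAG_2
  unfolding image_UN by (metis (no_types, lifting) SUP_cong)

end
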